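(* For $i\in\{0,1\}$, let $N_i\subseteq W({\rm G}_2)$ be the stabilizer of $\beta_i$ under the action of $W({\rm G}_2)$ on $\Psi^+$, and let $D_i$ be a set of left coset representatives for $N_i$ in $W({\rm G}_2)$. Let $K_0=\{1\}\subseteq N_0$ and let $K_1\subseteq N_1$ be the subgroup generated by $r_0r_1r_0r_1r_0$. Then for every $r\in W({\rm G}_2)$ and $i\in\{0,1\}$ there exist $a\in D_i$ and $b\in K_i$ such that $re_i=ae_ib$ in ${\rm Br}({\rm G}_2)$.
   Context: Let $\delta$ be an indeterminate. ${\rm Br}({\rm G}_2)$ is the $\mathbb{Z}[\delta^{\pm1}]$-algebra generated by $r_0,r_1,e_0,e_1$ subject to the following relations: - $r_0^2=r_1^2=1$; - $r_ie_i=e_ir_i=e_i$ for $i=0,1$; - $e_0^2=\delta^3e_0$ and $e_1^2=\delta e_1$; - $r_0e_1e_0=r_1e_0$ and $e_0e_1r_0=e_0r_1$; - $e_1r_0e_1r_0e_1=e_1$ and $e_1r_0e_1r_0r_1=e_1r_0r_1r_0$; - $e_0r_1e_0=\delta^2e_0$; - $r_1r_0e_1r_0e_1=r_0r_1r_0e_1$; - $(r_1r_0)^6=1$. Let $\Psi$ be a root system of type ${\rm G}_2$ with simple roots $\beta_0$ (short) and $\beta_1$ (long), and positive roots $\Psi^+$. $W({\rm G}_2)$ is generated by the reflections $s_0,s_1$ in $\beta_0,\beta_1$. It acts on $\Psi^+$ by $w\cdot\beta=$ the unique element of $\Psi^+\cap\{\pm w\beta\}$. The subgroup of units of ${\rm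 Br}({\rm G}_2)$ generated by $r_0,r_1$ is isomorphic to $W({\rm G}_2)$ via $r_i\mapsto s_i$. Elements of $W({\rm G}_2)$ are identified with their images in ${\rm Br}({\rm G}_2)$. *)

theory Defs
  imports Main
begin

datatype gen = R0 | R1 | E0 | E1

text \<open>A monomial of the free Z[delta^(+-1)]-algebra on the generators is a word in the
generators together with an exponent of delta (delta is central).  An element of the
free algebra is a finitely supported Z-valued coefficient function on monomials;
the ideal below is generated from finitely supported elements, so all its members are
finitely supported.\<close>
type_synonym mon = "gen list \<times> int"
type_synonym elt = "mon \<Rightarrow> int"

definition mono :: "mon \<Rightarrow> elt" where
  "mono m = (\<lambda>x. if x = m then 1 else 0)"

text \<open>Left multiplication by the monomial (w,k): (w,k)*(y,j) = (w@y, k+j).\<close>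
definition lmul :: "mon \<Rightarrow> elt \<Rightarrow> elt" where
  "lmul m f = (\<lambda>(x, j). if take (length (fst m)) x = fst m
                        then f (drop (length (fst m)) x, j - snd m) else 0)"

text \<open>Right multiplication by the monomial (w,k): (y,j)*(w,k) = (y@w, j+k).\<close>
definition rmul :: "mon \<Rightarrow> elt \<Rightarrow> elt" where
  "rmul m f = (\<lambda>(x, j). if length (fst m) \<le> length x \<and>
                           drop (length x - length (fst m)) x = fst m
                        then f (take (length x - length (fst m)) x, j - snd m) else 0)"

text \<open>Defining relations of Br(G2): a pair (m1, m2) stands for the relation m1 = m2.\<close>
definition br_rels :: "(mon \<times> mon) list" where
  "br_rels = [
     (([R0,R0],0), ([],0)),
     (([R1,R1],0), ([],0)),
     (([R0,E0],0), ([E0],0)),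
     (([E0,R0],0), ([E0],0)),
     (([R1,E1],0), ([E1],0)),
     (([E1,R1],0), ([E1],0)),
     (([E0,E0],0), ([E0],3)),
     (([E1,E1],0), ([E1],1)),
     (([R0,E1,E0],0), ([R1,E0],0)),
     (([E0,E1,R0],0), ([E0,R1],0)),
     (([E1,R0,E1,R0,E1],0), ([E1],0)),
     (([E1,R0,E1,R0,R1],0), ([E1,R0,R1,R0],0)),
     (([E0,R1,E0],0), ([E0],2)),
     (([R1,R0,E1,R0,E1],0), ([R0,R1,R0,E1],0)),
     ((concat (replicate 6 [R1,R0]),0), ([],0))
   ]"

text \<open>Closure under addition, negation and left/right multiplication by monomials
(including the pure scalars delta^k) gives closure under multiplication by arbitrary
algebra elements on both sides.\<close>
inductive_set br_ideal :: "elt set" where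
  rel: "(m1, m2) \<in> set br_rels \<Longrightarrow> (\<lambda>x. mono m1 x - mono m2 x) \<in> br_ideal"
| zero: "(\<lambda>x. 0) \<in> br_ideal"
| add: "f \<in> br_ideal \<Longrightarrow> g \<in> br_ideal \<Longrightarrow> (\<lambda>x. f x + g x) \<in> br_ideal"
| neg: "f \<in> br_ideal \<Longrightarrow> (\<lambda>x. - f x) \<in> br_ideal"
| left: "f \<in> br_ideal \<Longrightarrow> lmul m f \<in> br_ideal"
| right: "f \<in> br_ideal \<Longrightarrow> rmul m f \<in> br_ideal"

definition br_eq :: "gen list \<Rightarrow> gen list \<Rightarrow> bool" where
  "br_eq u v \<longleftrightarrow> (\<lambda>x. mono (u, 0) x - mono (v, 0) x) \<in> br_ideal"

text \<open>Vectors a*beta0 + b*beta1 are written as pairs (a,b).\<close>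
type_synonym vec = "int \<times> int"

definition beta :: "nat \<Rightarrow> vec" where
  "beta i = (if i = 0 then (1, 0) else (0, 1))"

definition pos_roots :: "vec set" where
  "pos_roots = {(1,0), (0,1), (1,1), (2,1), (3,1), (3,2)}"

text \<open>Simple reflections: s0 beta0 = -beta0, s0 beta1 = beta1 + 3 beta0;
      s1 beta0 = beta0 + beta1, s1 beta1 = -beta1.\<close>
definition srefl :: "nat \<Rightarrow> vec \<Rightarrow> vec" where
  "srefl i = (if i = 0 then (\<lambda>(a, b). (- a + 3 * b, b)) else (\<lambda>(a, b). (a, a - b)))"

fun wmap :: "nat list \<Rightarrow> vec \<Rightarrow> vec" where
  "wmap [] = id"
| "wmap (j # u) = srefl j \<circ> wmap u"

definition words01 :: "nat list set" where
  "words01 = {u. set u \<subseteq> {0, 1}}"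

definition WG2 :: "(vec \<Rightarrow> vec) set" where
  "WG2 = wmap ` words01"

definition act :: "(vec \<Rightarrow> vec) \<Rightarrow> vec \<Rightarrow> vec" where
  "act w b = (if w b \<in> pos_roots then w b else (- fst (w b), - snd (w b)))"

definition stab :: "nat \<Rightarrow> (vec \<Rightarrow> vec) set" where
  "stab i = {w \<in> WG2. act w (beta i) = beta i}"

definition left_coset_reps :: "(vec \<Rightarrow> vec) set \<Rightarrow> (vec \<Rightarrow> vec) set \<Rightarrow> bool" where
  "left_coset_reps D N \<longleftrightarrow> D \<subseteq> WG2 \<and>
     (\<forall>w\<in>WG2. \<exists>!d. d \<in> D \<and> d \<in> (\<lambda>n. w \<circ> n) ` N)"

inductive_set gen_subgroup :: "(vec \<Rightarrow> vec) \<Rightarrow> (vec \<Rightarrow> vec) set" for g where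
  one: "id \<in> gen_subgroup g"
| gen: "g \<in> gen_subgroup g"
| comp: "x \<in> gen_subgroup g \<Longrightarrow> y \<in> gen_subgroup g \<Longrightarrow> x \<circ> y \<in> gen_subgroup g"
| inverse: "x \<in> gen_subgroup g \<Longrightarrow> inv x \<in> gen_subgroup g"

definition Ksub :: "nat \<Rightarrow> (vec \<Rightarrow> vec) set" where
  "Ksub i = (if i = 0 then {id} else gen_subgroup (wmap [0,1,0,1,0]))"

text \<open>The image of w in Br(G2): r_j1 ... r_jn for a word representing w
(well defined since r_i -> s_i is an isomorphism onto W(G2)).\<close>
definition rword :: "nat list \<Rightarrow> gen list" where
  "rword u = map (\<lambda>j. if j = 0 then R0 else R1) u"

definition img :: "(vec \<Rightarrow> vec) \<Rightarrow> gen list" where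
  "img w = rword (SOME u. u \<in> words01 \<and> wmap u = w)"

definition egen :: "nat \<Rightarrow> gen" where
  "egen i = (if i = 0 then E0 else E1)"

end

(*
  If a = r n with n in the stabilizer N_i of beta_i, then a e_i b = r e_i as soon as
  n e_i b = e_i, so it suffices to treat the four elements of N_i.  For i = 0 they are
  1, r0, r1r0r1r0r1 and r0r1r0r1r0r1, and all of them are absorbed by e0 using
  r0 e1 e0 = r1 e0; for i = 1 they are 1, r1, c = r0r1r0r1r0 and c r1, where c commutes
  with e1 and is an involution, so b = c works for the last two.
  Since the image of w in Br(G2) is defined through an arbitrary word for w, we also need
  that words with the same image in W(G2) are equal in Br(G2): using only r_i^2 = 1 and the
  braid relation (a consequence of (r1 r0)^6 = 1) every word reduces to one of twelve
  reduced words, and these have distinct images in W(G2).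
*)
theory Submission
  imports Defs
begin

notation br_eq (infix "\<approx>" 50)

lemma br_eq_refl: "u \<approx> u"
  using br_ideal.zero by (simp add: br_eq_def)

lemma br_eq_sym: "u \<approx> v \<Longrightarrow> v \<approx> u"
  unfolding br_eq_def by (drule br_ideal.neg) simp

lemma br_eq_trans [trans]: "u \<approx> v \<Longrightarrow> v \<approx> w \<Longrightarrow> u \<approx> w"
  unfolding br_eq_def by (drule (1) br_ideal.add) simp

lemma lmul_mono_diff:
  "lmul (w, 0) (\<lambda>x. mono (u, 0) x - mono (v, 0) x) = (\<lambda>x. mono (w @ u, 0) x - mono (w @ v, 0) x)"
proof (rule ext, clarify)
  fix y :: "gen list" and j :: int
  have split: "\<And>u. y = w @ u \<longleftrightarrow> take (length w) y = w \<and> drop (length w) y = u"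
    by (metis append_eq_conv_conj)
  show "lmul (w, 0) (\<lambda>x. mono (u, 0) x - mono (v, 0) x) (y, j)
          = mono (w @ u, 0) (y, j) - mono (w @ v, 0) (y, j)"
    unfolding lmul_def mono_def using split[of u] split[of v] by auto
qed

lemma rmul_mono_diff:
  "rmul (w, 0) (\<lambda>x. mono (u, 0) x - mono (v, 0) x) = (\<lambda>x. mono (u @ w, 0) x - mono (v @ w, 0) x)"
proof (rule ext, clarify)
  fix y :: "gen list" and j :: int
  show "rmul (w, 0) (\<lambda>x. mono (u, 0) x - mono (v, 0) x) (y, j)
          = mono (u @ w, 0) (y, j) - mono (v @ w, 0) (y, j)"
  proof (cases "length w \<le> length y \<and> drop (length y - length w) y = w")
    case True
    then obtain t where "y = t @ w"
      by (metis append_take_drop_id)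
    then show ?thesis by (simp add: rmul_def mono_def)
  next
    case False
    then have "\<And>z. y \<noteq> z @ w" by auto
    then show ?thesis using False by (simp add: rmul_def mono_def)
  qed
qed

lemma br_eq_append_left: "u \<approx> v \<Longrightarrow> w @ u \<approx> w @ v"
  unfolding br_eq_def by (drule br_ideal.left[where m = "(w, 0)"]) (simp only: lmul_mono_diff)

lemma br_eq_append_right: "u \<approx> v \<Longrightarrow> u @ w \<approx> v @ w"
  unfolding br_eq_def by (drule br_ideal.right[where m = "(w, 0)"]) (simp only: rmul_mono_diff)

lemma br_eq_context: "u \<approx> v \<Longrightarrow> p @ u @ s \<approx> p @ v @ s"
  by (intro br_eq_append_left br_eq_append_right)

lemma br_eq_rel: "((u, 0), (v, 0)) \<in> set br_rels \<Longrightarrow> u \<approx> v"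
  unfolding br_eq_def by (rule br_ideal.rel)

lemma rel_r0_square: "[R0, R0] \<approx> []" by (rule br_eq_rel) (simp add: br_rels_def)
lemma rel_r1_square: "[R1, R1] \<approx> []" by (rule br_eq_rel) (simp add: br_rels_def)
lemma rel_r0_e0: "[R0, E0] \<approx> [E0]" by (rule br_eq_rel) (simp add: br_rels_def)
lemma rel_r1_e1: "[R1, E1] \<approx> [E1]" by (rule br_eq_rel) (simp add: br_rels_def)
lemma rel_r0_e1_e0: "[R0, E1, E0] \<approx> [R1, E0]" by (rule br_eq_rel) (simp add: br_rels_def)
lemma rel_e1_r0_e1_r0_r1: "[E1, R0, E1, R0, R1] \<approx> [E1, R0, R1, R0]"
  by (rule br_eq_rel) (simp add: br_rels_def)
lemma rel_r1_r0_e1_r0_e1: "[R1, R0, E1, R0, E1] \<approx> [R0, R1, R0, E1]"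
  by (rule br_eq_rel) (simp add: br_rels_def)
lemma rel_r1_r0_power6: "concat (replicate 6 [R1, R0]) \<approx> []"
  by (rule br_eq_rel) (simp add: br_rels_def)

lemma rword_append: "rword (u @ v) = rword u @ rword v"
  by (simp add: rword_def)

lemma rword_rev_cancel: "rword u @ rword (rev u) \<approx> []"
proof (induction u)
  case Nil
  show ?case by (simp add: rword_def br_eq_refl)
next
  case (Cons j u)
  let ?g = "if j = 0 then R0 else R1"
  have "rword (j # u) @ rword (rev (j # u)) = [?g] @ (rword u @ rword (rev u)) @ [?g]"
    by (simp add: rword_def)
  also have "\<dots> \<approx> [?g] @ [] @ [?g]"
    using Cons.IH by (rule br_eq_context)
  also have "\<dots> \<approx> []"
    using rel_r0_square rel_r1_square by simp
  finally show ?case .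
qed

lemma rword_braid: "rword [1,0,1,0,1,0] \<approx> rword [0,1,0,1,0,1]"
proof -
  let ?x = "rword [1,0,1,0,1,0]" and ?y = "rword [0,1,0,1,0,1]"
  have xx: "?x @ ?x \<approx> []"
    using rel_r1_r0_power6 by (simp add: rword_def numeral_eq_Suc)
  have xy: "?x @ ?y \<approx> []"
    using rword_rev_cancel[of "[1,0,1,0,1,0]"] by simp
  have "?x = ?x @ []" by simp
  also have "\<dots> \<approx> ?x @ (?x @ ?y)"
    using br_eq_sym[OF xy] by (rule br_eq_append_left)
  also have "\<dots> = (?x @ ?x) @ ?y" by simp
  also have "\<dots> \<approx> [] @ ?y"
    using xx by (rule br_eq_append_right)
  finally show ?thesis by simp
qed

lemma srefl_involutive: "srefl j \<circ> srefl j = id"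
  by (auto simp: srefl_def fun_eq_iff)

lemma wmap_append: "wmap (u @ v) = wmap u \<circ> wmap v"
  by (induction u) auto

text \<open>The twelve elements of the dihedral group W(G2); for reduced w and j in {0,1},
  reduce_Cons j w is the reduced word for s_j w.\<close>

definition reduced_words :: "nat list list" where
  "reduced_words = [[], [0], [1], [0,1], [1,0], [0,1,0], [1,0,1], [0,1,0,1], [1,0,1,0],
                    [0,1,0,1,0], [1,0,1,0,1], [0,1,0,1,0,1]]"

definition reduce_Cons :: "nat \<Rightarrow> nat list \<Rightarrow> nat list" where
  "reduce_Cons j w =
     (if w \<noteq> [] \<and> hd w = j then tl w
      else if j # w = [1,0,1,0,1,0] then [0,1,0,1,0,1]
      else if j # w = [1,0,1,0,1,0,1] then [0,1,0,1,0]
      else j # w)"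

fun reduce :: "nat list \<Rightarrow> nat list" where
  "reduce [] = []"
| "reduce (j # u) = reduce_Cons j (reduce u)"

lemma reduce_Cons_cases:
  obtains (cancel) v where "w = j # v" "reduce_Cons j w = v"
    | (braid) "j # w = [1,0,1,0,1,0]" "reduce_Cons j w = [0,1,0,1,0,1]"
    | (braid_tail) "j # w = [1,0,1,0,1,0,1]" "reduce_Cons j w = [0,1,0,1,0]"
    | (keep) "reduce_Cons j w = j # w"
proof -
  have "(w \<noteq> [] \<and> hd w = j) \<or> j # w = [1,0,1,0,1,0] \<or> j # w = [1,0,1,0,1,0,1]
        \<or> reduce_Cons j w = j # w"
    by (auto simp: reduce_Cons_def)
  then show ?thesis
    using that by (auto simp: reduce_Cons_def neq_Nil_conv)
qed

lemma rword_reduce_Cons: "rword (j # w) \<approx> rword (reduce_Cons j w)"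
proof (cases j w rule: reduce_Cons_cases)
  case (cancel v)
  have "rword (j # w) = rword [j, j] @ rword v"
    using cancel by (simp add: rword_def)
  also have "\<dots> \<approx> [] @ rword v"
    using rel_r0_square rel_r1_square by (intro br_eq_append_right) (simp add: rword_def)
  finally show ?thesis using cancel by simp
next
  case braid
  then show ?thesis using rword_braid by simp
next
  case braid_tail
  have "rword [1,0,1,0,1,0,1] = rword [1,0,1,0,1,0] @ [R1]" by (simp add: rword_def)
  also have "\<dots> \<approx> rword [0,1,0,1,0,1] @ [R1]"
    using rword_braid by (rule br_eq_append_right)
  also have "\<dots> = rword [0,1,0,1,0] @ [R1, R1]" by (simp add: rword_def)
  also have "\<dots> \<approx> rword [0,1,0,1,0] @ []"
    using rel_r1_square by (rule br_eq_append_left)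
  finally show ?thesis using braid_tail by simp
next
  case keep
  then show ?thesis by (simp add: br_eq_refl)
qed

lemma wmap_reduce_Cons: "wmap (reduce_Cons j w) = wmap (j # w)"
proof (cases j w rule: reduce_Cons_cases)
  case (cancel v)
  then have "wmap (j # w) = (srefl j \<circ> srefl j) \<circ> wmap v"
    by (simp add: comp_assoc)
  then show ?thesis using cancel by (simp add: srefl_involutive)
next
  case braid
  then show ?thesis by (simp add: fun_eq_iff srefl_def)
next
  case braid_tail
  then show ?thesis by (simp add: fun_eq_iff srefl_def)
qed simp

lemma rword_reduce: "rword u \<approx> rword (reduce u)"
proof (induction u)
  case Nil
  show ?case by (simp add: br_eq_refl)
next
  case (Cons j u)
  have "rword (j # u) = rword [j] @ rword u" by (simp add: rword_def)
  also have "\<dots> \<approx> rword [j] @ rword (reduce u)"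
    using Cons.IH by (rule br_eq_append_left)
  also have "\<dots> \<approx> rword (reduce (j # u))"
    using rword_reduce_Cons by (simp add: rword_def)
  finally show ?case .
qed

lemma wmap_reduce: "wmap (reduce u) = wmap u"
  by (induction u) (simp_all add: wmap_reduce_Cons)

lemma reduce_Cons_in_reduced_words:
  assumes "j \<in> {0, 1}" and "w \<in> set reduced_words"
  shows "reduce_Cons j w \<in> set reduced_words"
proof -
  have "\<forall>w \<in> set reduced_words. \<forall>j \<in> {0, 1}. reduce_Cons j w \<in> set reduced_words"
    by (simp add: reduced_words_def reduce_Cons_def)
  then show ?thesis using assms by blast
qed

lemma reduce_in_reduced_words: "u \<in> words01 \<Longrightarrow> reduce u \<in> set reduced_words"
proof (induction u)
  case Nil
  show ?case by (simp add: reduced_words_def)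
next
  case (Cons j u)
  then show ?case by (simp add: words01_def reduce_Cons_in_reduced_words)
qed

lemma inj_on_wmap_reduced_words: "inj_on wmap (set reduced_words)"
proof -
  have "distinct (map (\<lambda>u. (wmap u (1, 0), wmap u (0, 1))) reduced_words)"
    by (simp add: reduced_words_def srefl_def)
  then have "inj_on ((\<lambda>f. (f (1, 0), f (0, 1))) \<circ> wmap) (set reduced_words)"
    by (simp add: distinct_map comp_def)
  then show ?thesis by (rule inj_on_imageI2)
qed

lemma rword_eq_if_wmap_eq:
  assumes "u \<in> words01" and "v \<in> words01" and "wmap u = wmap v"
  shows "rword u \<approx> rword v"
proof -
  have "reduce u = reduce v"
    using inj_on_wmap_reduced_words reduce_in_reduced_words assms
    by (auto simp: wmap_reduce inj_on_def)
  then show ?thesis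
    using rword_reduce[of u] br_eq_sym[OF rword_reduce[of v]] by (auto intro: br_eq_trans)
qed

lemma img_wmap: "u \<in> words01 \<Longrightarrow> img (wmap u) \<approx> rword u"
  unfolding img_def
  by (rule someI2[where P = "\<lambda>v. v \<in> words01 \<and> wmap v = wmap u"])
    (auto intro: rword_eq_if_wmap_eq)

lemma r1_r0_r1_r0_r1_e0: "[R1,R0,R1,R0,R1,E0] \<approx> [E0]"
proof -
  have "[R1,R0,R1,R0,R1,E0] \<approx> [R1,R0,R1,R0,R0,E1,E0]"
    using br_eq_context[OF br_eq_sym[OF rel_r0_e1_e0], of "[R1,R0,R1,R0]" "[]"] by simp
  also have "\<dots> \<approx> [R1,R0,R1,E1,E0]"
    using br_eq_context[OF rel_r0_square, of "[R1,R0,R1]" "[E1,E0]"] by simp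
  also have "\<dots> \<approx> [R1,R0,E1,E0]"
    using br_eq_context[OF rel_r1_e1, of "[R1,R0]" "[E0]"] by simp
  also have "\<dots> \<approx> [R1,R1,E0]"
    using br_eq_context[OF rel_r0_e1_e0, of "[R1]" "[]"] by simp
  also have "\<dots> \<approx> [E0]"
    using br_eq_context[OF rel_r1_square, of "[]" "[E0]"] by simp
  finally show ?thesis .
qed

lemma r0_r1_r0_r1_r0_r1_e0: "[R0,R1,R0,R1,R0,R1,E0] \<approx> [E0]"
proof -
  have "[R0,R1,R0,R1,R0,R1,E0] \<approx> [R0,E0]"
    using br_eq_append_left[OF r1_r0_r1_r0_r1_e0, of "[R0]"] by simp
  also have "\<dots> \<approx> [E0]" by (rule rel_r0_e0)
  finally show ?thesis .
qed

lemma r0_r1_r0_r1_r0_e1: "[R0,R1,R0,R1,R0,E1] \<approx> [E1,R0,E1]"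
proof -
  have "[R0,R1,R0,R1,R0,E1] \<approx> [R0,R1,R1,R0,E1,R0,E1]"
    using br_eq_append_left[OF br_eq_sym[OF rel_r1_r0_e1_r0_e1], of "[R0,R1]"] by simp
  also have "\<dots> \<approx> [E1,R0,E1]"
    using br_eq_append_right[OF rword_rev_cancel[of "[0,1]"], of "[E1,R0,E1]"]
    by (simp add: rword_def)
  finally show ?thesis .
qed

lemma e1_r0_r1_r0_r1_r0: "[E1,R0,R1,R0,R1,R0] \<approx> [E1,R0,E1]"
proof -
  have "[E1,R0,R1,R0,R1,R0] \<approx> [E1,R0,E1,R0,R1,R1,R0]"
    using br_eq_append_right[OF br_eq_sym[OF rel_e1_r0_e1_r0_r1], of "[R1,R0]"] by simp
  also have "\<dots> \<approx> [E1,R0,E1]"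
    using br_eq_append_left[OF rword_rev_cancel[of "[0,1]"], of "[E1,R0,E1]"]
    by (simp add: rword_def)
  finally show ?thesis .
qed

lemma r0_r1_r0_r1_r0_conj_e1: "[R0,R1,R0,R1,R0,E1,R0,R1,R0,R1,R0] \<approx> [E1]"
proof -
  let ?c = "rword [0,1,0,1,0]"
  have "[R0,R1,R0,R1,R0,E1,R0,R1,R0,R1,R0] = [R0,R1,R0,R1,R0,E1] @ ?c"
    by (simp add: rword_def)
  also have "\<dots> \<approx> [E1,R0,R1,R0,R1,R0] @ ?c"
    using br_eq_trans[OF r0_r1_r0_r1_r0_e1 br_eq_sym[OF e1_r0_r1_r0_r1_r0]]
    by (rule br_eq_append_right)
  also have "\<dots> = [E1] @ (?c @ rword (rev [0,1,0,1,0]))"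
    by (simp add: rword_def)
  also have "\<dots> \<approx> [E1] @ []"
    using rword_rev_cancel by (rule br_eq_append_left)
  finally show ?thesis by simp
qed

lemma r0_r1_r0_r1_r0_r1_conj_e1: "[R0,R1,R0,R1,R0,R1,E1,R0,R1,R0,R1,R0] \<approx> [E1]"
proof -
  have "[R0,R1,R0,R1,R0,R1,E1,R0,R1,R0,R1,R0] \<approx> [R0,R1,R0,R1,R0,E1,R0,R1,R0,R1,R0]"
    using br_eq_context[OF rel_r1_e1, of "[R0,R1,R0,R1,R0]" "[R0,R1,R0,R1,R0]"] by simp
  also have "\<dots> \<approx> [E1]" by (rule r0_r1_r0_r1_r0_conj_e1)
  finally show ?thesis .
qed

lemma reduced_stabilizer_beta0:
  "v \<in> set reduced_words \<Longrightarrow> act (wmap v) (beta 0) = beta 0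
     \<Longrightarrow> v \<in> {[], [0], [1,0,1,0,1], [0,1,0,1,0,1]}"
  by (auto simp: reduced_words_def act_def beta_def srefl_def pos_roots_def)

lemma reduced_stabilizer_beta1:
  "v \<in> set reduced_words \<Longrightarrow> act (wmap v) (beta 1) = beta 1
     \<Longrightarrow> v \<in> {[], [1], [0,1,0,1,0], [0,1,0,1,0,1]}"
  by (auto simp: reduced_words_def act_def beta_def srefl_def pos_roots_def)

lemma reduced_stabilizer_absorbed:
  assumes "v \<in> set reduced_words" and "i \<in> {0, 1}" and "act (wmap v) (beta i) = beta i"
  shows "\<exists>b \<in> words01. wmap b \<in> Ksub i \<and> rword v @ [egen i] @ rword b \<approx> [egen i]"
proof -
  have Ksub0: "wmap [] \<in> Ksub 0" by (simp add: Ksub_def)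
  have Ksub1: "wmap [] \<in> Ksub 1" "wmap [0,1,0,1,0] \<in> Ksub 1"
    by (auto simp: Ksub_def intro: gen_subgroup.one gen_subgroup.gen)
  have words: "[] \<in> words01" "[0,1,0,1,0] \<in> words01" by (auto simp: words01_def)
  show ?thesis
  proof (cases "i = 0")
    case True
    then have "v \<in> {[], [0], [1,0,1,0,1], [0,1,0,1,0,1]}"
      using reduced_stabilizer_beta0 assms by simp
    then have "rword v @ [egen i] @ rword [] \<approx> [egen i]"
      using True rel_r0_e0 r1_r0_r1_r0_r1_e0 r0_r1_r0_r1_r0_r1_e0
      by (auto simp: rword_def egen_def br_eq_refl)
    then show ?thesis using True Ksub0 words by blast
  next
    case False
    then have i: "i = 1" using assms(2) by simp
    then have "v \<in> {[], [1], [0,1,0,1,0], [0,1,0,1,0,1]}"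
      using reduced_stabilizer_beta1 assms by simp
    then have "rword v @ [egen i] @ rword [] \<approx> [egen i]
               \<or> rword v @ [egen i] @ rword [0,1,0,1,0] \<approx> [egen i]"
      using i rel_r1_e1 r0_r1_r0_r1_r0_conj_e1 r0_r1_r0_r1_r0_r1_conj_e1
      by (auto simp: rword_def egen_def br_eq_refl)
    then show ?thesis using i Ksub1 words by blast
  qed
qed

lemma stabilizer_absorbed:
  assumes v: "v \<in> words01" and i: "i \<in> {0, 1}" and fixes_beta: "act (wmap v) (beta i) = beta i"
  shows "\<exists>b \<in> words01. wmap b \<in> Ksub i \<and> rword v @ [egen i] @ rword b \<approx> [egen i]"
proof -
  obtain b where b: "b \<in> words01" "wmap b \<in> Ksub i"
    and absorbed: "rword (reduce v) @ [egen i] @ rword b \<approx> [egen i]"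
    using reduced_stabilizer_absorbed[OF reduce_in_reduced_words[OF v] i]
    using fixes_beta by (auto simp: wmap_reduce)
  have "rword v @ [egen i] @ rword b \<approx> rword (reduce v) @ [egen i] @ rword b"
    using rword_reduce by (rule br_eq_append_right)
  also note absorbed
  finally show ?thesis using b by blast
qed

theorem lemma9p5:
  fixes D :: "nat \<Rightarrow> (vec \<Rightarrow> vec) set"
  assumes "\<forall>i\<in>{0::nat, 1}. left_coset_reps (D i) (stab i)"
  shows "\<forall>r\<in>WG2. \<forall>i\<in>{0::nat, 1}. \<exists>a\<in>D i. \<exists>b\<in>Ksub i.
           br_eq (img r @ [egen i]) (img a @ [egen i] @ img b)"
proof (intro ballI)
  fix r i
  assume r: "r \<in> WG2" and i: "i \<in> {0::nat, 1}"
  obtain a n where a: "a \<in> D i" and n: "n \<in> stab i" and a_eq: "a = r \<circ> n"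
    using assms i r unfolding left_coset_reps_def by blast
  obtain u where u: "u \<in> words01" and r_eq: "r = wmap u"
    using r by (auto simp: WG2_def)
  obtain v where v: "v \<in> words01" and n_eq: "n = wmap v"
    and fixes_beta: "act (wmap v) (beta i) = beta i"
    using n by (auto simp: stab_def WG2_def)
  obtain b where b: "b \<in> words01" "wmap b \<in> Ksub i"
    and absorbed: "rword v @ [egen i] @ rword b \<approx> [egen i]"
    using stabilizer_absorbed[OF v i fixes_beta] by blast
  have uv: "u @ v \<in> words01" using u v by (simp add: words01_def)
  have "img r @ [egen i] \<approx> rword u @ [egen i]"
    using img_wmap[OF u] r_eq by (simp add: br_eq_append_right)
  also have "\<dots> \<approx> rword (u @ v) @ [egen i] @ rword b"
    using br_eq_append_left[OF br_eq_sym[OF absorbed]] by (simp add: rword_append)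
  also have "\<dots> \<approx> img a @ [egen i] @ rword b"
    using img_wmap[OF uv] a_eq r_eq n_eq by (simp add: br_eq_append_right br_eq_sym wmap_append)
  also have "\<dots> \<approx> img a @ [egen i] @ img (wmap b)"
    using br_eq_append_left[OF br_eq_sym[OF img_wmap[OF b(1)]], of "img a @ [egen i]"] by simp
  finally show "\<exists>a\<in>D i. \<exists>b\<in>Ksub i. img r @ [egen i] \<approx> img a @ [egen i] @ img b"
    using a b(2) by blast
qed

end
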